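(* Let $d,K,n$ be positive integers with $K\ge 2$. For $\tau>0$ define $\mathcal L_0(\mathbf W,\mathbf H,\tau)=\tau\log\sum_{i=1}^n\sum_{k=1}^K\mathcal L_{\mathrm{CE}}(\mathbf W^\top\mathbf h_{k,i},\mathbf y_k,\tau)$, and let $\mathcal{WH}^-=\{(\mathbf W,\mathbf H)\in\mathrm{OB}(d,K)\times\mathrm{OB}(d,nK):(\mathbf w_{k'}-\mathbf w_k)^\top\mathbf h_{k,i}\le0\ \forall i\in[n],k\in[K],k'\in[K]\setminus\{k\}\}$. Then $\mathcal L_0(\cdot,\cdot,\tau)$ converges uniformly to $\mathcal L_{\mathrm{HardMax}}$ on $\mathcal{WH}^-$ as $\tau\to0$.
   Context: $\mathrm{OB}(d,m)$ is the set of real $d\times m$ matrices with unit-norm columns; $\mathbf W$ has columns $\mathbf w_k$, $\mathbf H$ has columns $\mathbf h_{k,i}$. $\mathbf y_k$ is the $k$-th standard basis vector of $\mathbb R^K$; $\mathcal L_{\mathrm{CE}}(\mathbf z,\mathbf y_k,\tau)=-\log\big(\exp(z_k/\tau)/\sum_{j=1}^K\exp(z_j/\tau)\big)$. $\mathcal L_{\mathrm{HardMax}}(\mathbf W,\mathbf H)=\max_k\max_i\max_{k'\ne k}\langle\mathbf w_{k'}-\mathbf w_k,\mathbf h_{k,i}\rangle$. *)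

theory Defs
  imports "HOL-Analysis.Analysis"
begin

text \<open>Classes are indexed by k < K (0-based), samples by i < n.
  W is represented by its columns w k, H by its columns h k i, all in real^'d.\<close>

definition CE :: "nat \<Rightarrow> (nat \<Rightarrow> real) \<Rightarrow> nat \<Rightarrow> real \<Rightarrow> real" where
  "CE K z k \<tau> = - ln (exp (z k / \<tau>) / (\<Sum>j<K. exp (z j / \<tau>)))"

definition L0 :: "nat \<Rightarrow> nat \<Rightarrow> (nat \<Rightarrow> real^'d) \<Rightarrow> (nat \<Rightarrow> nat \<Rightarrow> real^'d) \<Rightarrow> real \<Rightarrow> real" where
  "L0 K n w h \<tau> = \<tau> * ln (\<Sum>i<n. \<Sum>k<K. CE K (\<lambda>j. w j \<bullet> h k i) k \<tau>)"

definition HardMax :: "nat \<Rightarrow> nat \<Rightarrow> (nat \<Rightarrow> real^'d) \<Rightarrow> (nat \<Rightarrow> nat \<Rightarrow> real^'d) \<Rightarrow> real" where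
  "HardMax K n w h = Max {(w k' - w k) \<bullet> h k i | k i k'. k < K \<and> i < n \<and> k' < K \<and> k' \<noteq> k}"

definition WHminus :: "nat \<Rightarrow> nat \<Rightarrow> ((nat \<Rightarrow> real^'d) \<times> (nat \<Rightarrow> nat \<Rightarrow> real^'d)) set" where
  "WHminus K n = {(w, h). (\<forall>k<K. norm (w k) = 1) \<and> (\<forall>k<K. \<forall>i<n. norm (h k i) = 1) \<and>
     (\<forall>i<n. \<forall>k<K. \<forall>k'<K. k' \<noteq> k \<longrightarrow> (w k' - w k) \<bullet> h k i \<le> 0)}"

end

theory Submission
  imports Defs
begin

text \<open>Write \<open>M\<close> for the hard-max margin and \<open>E = exp (M / \<tau>)\<close>. Each cross-entropy term equals
  \<open>ln (1 + \<Sum>\<^sub>j\<^sub>\<noteq>\<^sub>k exp (margin / \<tau>))\<close>, which lies between \<open>0\<close> and \<open>(K - 1) E\<close> because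
  \<open>ln (1 + x) \<le> x\<close>; on \<open>WHminus\<close> we have \<open>E \<le> 1\<close>, so the term at a maximising margin is at least
  \<open>ln (1 + E) \<ge> E / 2\<close>. Hence the sum \<open>S\<close> of all terms satisfies \<open>E / 2 \<le> S \<le> n K (K - 1) E\<close>,
  and \<open>\<tau> ln S\<close> differs from \<open>M = \<tau> ln E\<close> by at most a constant times \<open>\<tau>\<close>.\<close>

lemma ln_one_plus_ge_half:
  fixes x :: real
  assumes "0 \<le> x" "x \<le> 1"
  shows "x / 2 \<le> ln (1 + x)"
proof -
  have "- ln (1 + x) = ln (1 / (1 + x))"
    using assms by (simp add: ln_div)
  also have "\<dots> \<le> 1 / (1 + x) - 1"
    using assms by (intro ln_le_minus_one) simp
  also have "\<dots> = - (x / (1 + x))"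
    using assms by (simp add: field_simps)
  also have "\<dots> \<le> - (x / 2)"
  proof -
    have "x / 2 \<le> x / (1 + x)"
      using assms by (intro divide_left_mono) auto
    then show ?thesis by linarith
  qed
  finally show ?thesis by simp
qed

lemma scaled_ln_bounds:
  fixes \<tau> c C M S :: real
  assumes "\<tau> > 0" "c > 0" "c * exp (M / \<tau>) \<le> S" "S \<le> C * exp (M / \<tau>)"
  shows "M + \<tau> * ln c \<le> \<tau> * ln S" and "\<tau> * ln S \<le> M + \<tau> * ln C"
proof -
  have "S > 0"
    using assms(2,3) by (smt (verit) exp_gt_zero mult_pos_pos)
  then have "C > 0"
    using assms(4) by (smt (verit) exp_gt_zero mult_nonpos_nonneg)
  have "ln c + M / \<tau> = ln (c * exp (M / \<tau>))"
    using assms(2) by (simp add: ln_mult)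
  also have "\<dots> \<le> ln S"
    using assms(2,3) by (simp add: ln_mono)
  finally have "ln c + M / \<tau> \<le> ln S" .
  then have "\<tau> * (ln c + M / \<tau>) \<le> \<tau> * ln S"
    using assms(1) by (simp add: mult_left_mono)
  then show "M + \<tau> * ln c \<le> \<tau> * ln S"
    using assms(1) by (simp add: algebra_simps)
  have "ln S \<le> ln (C * exp (M / \<tau>))"
    using assms(4) \<open>S > 0\<close> by (rule ln_mono)
  also have "\<dots> = ln C + M / \<tau>"
    using \<open>C > 0\<close> by (simp add: ln_mult)
  finally have "ln S \<le> ln C + M / \<tau>" .
  then have "\<tau> * ln S \<le> \<tau> * (ln C + M / \<tau>)"
    using assms(1) by (simp add: mult_left_mono)
  then show "\<tau> * ln S \<le> M + \<tau> * ln C"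
    using assms(1) by (simp add: algebra_simps)
qed

lemma uniform_limit_at_right_0_of_linear_bound:
  fixes f :: "real \<Rightarrow> 'a \<Rightarrow> 'b::metric_space"
  assumes "\<And>\<tau> x. \<tau> > 0 \<Longrightarrow> x \<in> S \<Longrightarrow> dist (f \<tau> x) (g x) \<le> C * \<tau>"
  shows "uniform_limit S f g (at_right 0)"
proof (rule uniform_limitI)
  fix e :: real
  assume "e > 0"
  then have "\<forall>\<^sub>F \<tau> in at_right 0. \<tau> > 0 \<and> \<tau> < e / (\<bar>C\<bar> + 1)"
    by (auto simp: eventually_at_right_field intro!: exI [of _ "e / (\<bar>C\<bar> + 1)"])
  then show "\<forall>\<^sub>F \<tau> in at_right 0. \<forall>x\<in>S. dist (f \<tau> x) (g x) < e"
  proof (rule eventually_mono, intro ballI)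
    fix \<tau> x
    assume \<tau>: "\<tau> > 0 \<and> \<tau> < e / (\<bar>C\<bar> + 1)" and "x \<in> S"
    then have "dist (f \<tau> x) (g x) \<le> C * \<tau>"
      using assms by blast
    also have "\<dots> < (\<bar>C\<bar> + 1) * \<tau>"
      using \<tau> by (simp add: distrib_right abs_if mult_less_cancel_right)
    also have "\<dots> < e"
      using \<tau> by (simp add: pos_less_divide_eq mult.commute)
    finally show "dist (f \<tau> x) (g x) < e" .
  qed
qed

lemma CE_eq_ln_one_plus_sum_exp:
  assumes "\<tau> > 0" "k < K"
  shows "CE K z k \<tau> = ln (1 + (\<Sum>j\<in>{..<K} - {k}. exp ((z j - z k) / \<tau>)))"
proof -
  have "(\<Sum>j<K. exp ((z j - z k) / \<tau>)) = (\<Sum>j<K. exp (z j / \<tau>)) / exp (z k / \<tau>)"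
    by (simp add: sum_divide_distrib diff_divide_distrib exp_diff)
  then have "CE K z k \<tau> = ln (\<Sum>j<K. exp ((z j - z k) / \<tau>))"
    using assms by (simp add: CE_def ln_div sum_pos)
  also have "(\<Sum>j<K. exp ((z j - z k) / \<tau>)) = 1 + (\<Sum>j\<in>{..<K} - {k}. exp ((z j - z k) / \<tau>))"
    using assms(2) by (subst sum.remove [of _ k]) auto
  finally show ?thesis .
qed

lemma CE_nonneg:
  assumes "\<tau> > 0" "k < K"
  shows "0 \<le> CE K z k \<tau>"
  using assms by (simp add: CE_eq_ln_one_plus_sum_exp sum_nonneg)

lemma CE_le_exp_margin:
  assumes "\<tau> > 0" "k < K" and margin: "\<And>j. j < K \<Longrightarrow> j \<noteq> k \<Longrightarrow> z j - z k \<le> M"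
  shows "CE K z k \<tau> \<le> real (K - 1) * exp (M / \<tau>)"
proof -
  have "CE K z k \<tau> \<le> (\<Sum>j\<in>{..<K} - {k}. exp ((z j - z k) / \<tau>))"
    using assms(1,2) by (simp add: CE_eq_ln_one_plus_sum_exp ln_add_one_self_le_self sum_nonneg)
  also have "\<dots> \<le> (\<Sum>j\<in>{..<K} - {k}. exp (M / \<tau>))"
    using margin assms(1) by (intro sum_mono) (simp add: divide_right_mono)
  finally show ?thesis
    using assms(2) by simp
qed

lemma CE_ge_half_exp_margin:
  assumes "\<tau> > 0" "k < K" "j < K" "j \<noteq> k" "M \<le> z j - z k" "M \<le> 0"
  shows "exp (M / \<tau>) / 2 \<le> CE K z k \<tau>"
proof -
  have "exp (M / \<tau>) \<le> 1"
    using assms(1,6) by (simp add: divide_nonpos_pos)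
  then have "exp (M / \<tau>) / 2 \<le> ln (1 + exp (M / \<tau>))"
    by (intro ln_one_plus_ge_half) auto
  also have "\<dots> \<le> ln (1 + (\<Sum>j\<in>{..<K} - {k}. exp ((z j - z k) / \<tau>)))"
  proof -
    have "exp (M / \<tau>) \<le> exp ((z j - z k) / \<tau>)"
      using assms(1,5) by (simp add: divide_right_mono)
    also have "\<dots> \<le> (\<Sum>j\<in>{..<K} - {k}. exp ((z j - z k) / \<tau>))"
      using assms(3,4) by (intro member_le_sum) auto
    finally show ?thesis
      using exp_gt_zero [of "M / \<tau>"] by (intro ln_mono) linarith+
  qed
  finally show ?thesis
    using assms(1,2) by (simp add: CE_eq_ln_one_plus_sum_exp)
qed

lemma finite_margins:
  fixes K n :: nat
  shows "finite {(w k' - w k) \<bullet> h k i | k i k'. k < K \<and> i < n \<and> k' < K \<and> k' \<noteq> k}"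
proof (rule finite_subset)
  show "{(w k' - w k) \<bullet> h k i | k i k'. k < K \<and> i < n \<and> k' < K \<and> k' \<noteq> k}
      \<subseteq> (\<lambda>(k, i, k'). (w k' - w k) \<bullet> h k i) ` ({..<K} \<times> {..<n} \<times> {..<K})"
    by force
qed auto

lemma margin_le_HardMax:
  assumes "k < K" "i < n" "k' < K" "k' \<noteq> k"
  shows "(w k' - w k) \<bullet> h k i \<le> HardMax K n w h"
  unfolding HardMax_def using assms by (intro Max_ge finite_margins) blast

lemma HardMax_attained:
  assumes "K \<ge> 2" "n \<ge> 1"
  obtains k i k' where "k < K" "i < n" "k' < K" "k' \<noteq> k"
    and "HardMax K n w h = (w k' - w k) \<bullet> h k i"
proof -
  have "(w 1 - w 0) \<bullet> h 0 0 \<in> {(w k' - w k) \<bullet> h k i | k i k'. k < K \<and> i < n \<and> k' < K \<and> k' \<noteq> k}"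
    using assms by force
  then have "HardMax K n w h \<in> {(w k' - w k) \<bullet> h k i | k i k'. k < K \<and> i < n \<and> k' < K \<and> k' \<noteq> k}"
    unfolding HardMax_def by (intro Max_in finite_margins) auto
  then show ?thesis
    using that by blast
qed

lemma L0_bounds:
  assumes "K \<ge> 2" "n \<ge> 1" and wh: "(w, h) \<in> WHminus K n" and "\<tau> > 0"
  shows "HardMax K n w h - \<tau> * ln 2 \<le> L0 K n w h \<tau>"
    and "L0 K n w h \<tau> \<le> HardMax K n w h + \<tau> * ln (real (n * K * (K - 1)))"
proof -
  define M where "M = HardMax K n w h"
  define z where "z k i = (\<lambda>j. w j \<bullet> h k i)" for k i
  define S where "S = (\<Sum>i<n. \<Sum>k<K. CE K (z k i) k \<tau>)"
  have L0_eq: "L0 K n w h \<tau> = \<tau> * ln S"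
    by (simp add: L0_def S_def z_def)
  have margin_eq: "z k i j - z k i k = (w j - w k) \<bullet> h k i" for k i j
    by (simp add: z_def inner_diff_left)
  have CE_terms_nonneg: "0 \<le> CE K (z k i) k \<tau>" if "k < K" for k i
    using \<open>\<tau> > 0\<close> that by (rule CE_nonneg)
  have "S \<le> (\<Sum>i<n. \<Sum>k<K. real (K - 1) * exp (M / \<tau>))"
    unfolding S_def M_def using \<open>\<tau> > 0\<close>
    by (intro sum_mono CE_le_exp_margin) (simp_all add: margin_eq margin_le_HardMax)
  then have upper: "S \<le> real (n * K * (K - 1)) * exp (M / \<tau>)"
    using assms(1) by (simp add: mult.assoc of_nat_diff)
  obtain k0 i0 j0 where k0: "k0 < K" "i0 < n" "j0 < K" "j0 \<noteq> k0"
    and M_eq: "M = (w j0 - w k0) \<bullet> h k0 i0"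
    using HardMax_attained [OF assms(1,2)] unfolding M_def by metis
  have "M \<le> 0"
    using wh k0 M_eq by (auto simp: WHminus_def)
  then have "1 / 2 * exp (M / \<tau>) \<le> CE K (z k0 i0) k0 \<tau>"
    using CE_ge_half_exp_margin [OF \<open>\<tau> > 0\<close> k0(1,3,4)] by (simp add: M_eq margin_eq)
  also have "\<dots> \<le> (\<Sum>k<K. CE K (z k i0) k \<tau>)"
    using k0 CE_terms_nonneg by (intro member_le_sum) auto
  also have "\<dots> \<le> S"
    unfolding S_def using k0 CE_terms_nonneg
    by (intro member_le_sum [where f = "\<lambda>i. \<Sum>k<K. CE K (z k i) k \<tau>"] sum_nonneg) auto
  finally have lower: "1 / 2 * exp (M / \<tau>) \<le> S" .
  show "HardMax K n w h - \<tau> * ln 2 \<le> L0 K n w h \<tau>"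
    using scaled_ln_bounds(1) [OF \<open>\<tau> > 0\<close> _ lower upper]
    by (simp add: L0_eq M_def ln_div)
  show "L0 K n w h \<tau> \<le> HardMax K n w h + \<tau> * ln (real (n * K * (K - 1)))"
    using scaled_ln_bounds(2) [OF \<open>\<tau> > 0\<close> _ lower upper]
    by (simp add: L0_eq M_def)
qed

theorem mainTheorem10:
  fixes K n :: nat
  assumes "K \<ge> 2" and "n \<ge> 1"
  shows "uniform_limit (WHminus K n :: ((nat \<Rightarrow> real^'d) \<times> (nat \<Rightarrow> nat \<Rightarrow> real^'d)) set)
           (\<lambda>\<tau> (w, h). L0 K n w h \<tau>) (\<lambda>(w, h). HardMax K n w h) (at_right 0)"
proof (rule uniform_limit_at_right_0_of_linear_bound [where C = "ln 2 + ln (real (n * K * (K - 1)))"])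
  fix \<tau> :: real and x :: "(nat \<Rightarrow> real^'d) \<times> (nat \<Rightarrow> nat \<Rightarrow> real^'d)"
  assume "\<tau> > 0" "x \<in> WHminus K n"
  moreover obtain w h where x: "x = (w, h)"
    by (cases x)
  ultimately have "HardMax K n w h - \<tau> * ln 2 \<le> L0 K n w h \<tau>"
    and "L0 K n w h \<tau> \<le> HardMax K n w h + \<tau> * ln (real (n * K * (K - 1)))"
    using L0_bounds [OF assms] by auto
  moreover have "0 \<le> \<tau> * ln 2"
    using \<open>\<tau> > 0\<close> by simp
  moreover have "0 \<le> \<tau> * ln (real (n * K * (K - 1)))"
  proof (intro mult_nonneg_nonneg ln_ge_zero)
    show "0 \<le> \<tau>"
      using \<open>\<tau> > 0\<close> by simp
    show "1 \<le> real (n * K * (K - 1))"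
      unfolding one_of_nat_le_iff using assms by (simp add: Suc_le_eq)
  qed
  ultimately show "dist ((\<lambda>\<tau> (w, h). L0 K n w h \<tau>) \<tau> x) ((\<lambda>(w, h). HardMax K n w h) x)
      \<le> (ln 2 + ln (real (n * K * (K - 1)))) * \<tau>"
    by (simp add: x dist_real_def abs_le_iff algebra_simps)
qed

end
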